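(* Let $\mathcal{A}\subset\mathbb{Z}$ be a finite alphabet, let $G=(V,E)$ be a finite directed graph with edge labelling $\ell:E\to\mathcal{A}$, let $I\subseteq V$ be nonempty, and assume the matrix $M=\sum_{a\in\mathcal{A}}M_a$ is primitive. Let $\beta>1$ be a Pisot number, and let $\nu=(\phi^+)_*(\mu^+)$ and $\nu_I=(\phi_I^+)_*(\mu_I^+)$ be as described in the context. Then each of the measures $\nu_I$ and $\nu$ is pure: it is either absolutely continuous with respect to Lebesgue measure, or purely singular continuous, or purely atomic. The purely atomic case can only occur if the image $\phi^+(\mathcal{K}^+)$ is finite, and in that case the number of atoms is at most the number $\#V$ of vertices.
   Context: For $a\in\mathcal{A}$, $M_a$ is the $V\times V$ matrix with $(M_a)_{ij}=1$ if $(i,j)\in E$ and $\ell((i,j))=a$, and $0$ otherwise. By Perron–Frobenius, $M$ has a dominant eigenvalue $\lambda>0$ with positive left eigenvector $\mathbf v_L$ and positive right eigenvector $\mathbf v_R$, normalised by $\mathbf v_L^{\mathsf T}\mathbf v_R=1$. A path is a sequence of edges $e_1e_2\ldots$ with the terminal vertex of $e_j$ equal to the initial vertex of $e_{j+1}$. $\mathcal{K}^+\subseteq\mathcal{A}^{\mathbb{N}}$ is the set of sequences $(\ell(e_k))_{k\ge1}$ for infinite paths $e_1e_2\ldots$ in $G$, and $\mathcal{K}_I^+$ the subset obtained from infinite paths whose initial vertex lies in $I$. For a cylinder set $[\varepsilon_1,\ldots,\varepsilon_k]$ (sequences with $x_1=\varepsilon_1,\ldots,x_k=\varepsilon_k$),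 $\mu^+$ is the Borel probability measure on $\mathcal{K}^+$ with $\mu^+([\varepsilon_1,\ldots,\varepsilon_k])=\lambda^{-k}\mathbf v_L^{\mathsf T}M_{\varepsilon_1}\cdots M_{\varepsilon_k}\mathbf v_R$ (the shift-invariant measure of maximal entropy), and $\mu_I^+$ is the Borel probability measure on $\mathcal{K}_I^+$ with $\mu_I^+([\varepsilon_1,\ldots,\varepsilon_k])=\lambda^{-k}\mathbf v_I^{\mathsf T}M_{\varepsilon_1}\cdots M_{\varepsilon_k}\mathbf v_R/(\mathbf v_I^{\mathsf T}\mathbf v_R)$, where $\mathbf v_I$ is the indicator vector of $I$. A Pisot number is an algebraic integer $>1$ all of whose other Galois conjugates have modulus $<1$ (integers $\ge2$ included). The maps $\phi^+:\mathcal{K}^+\to\mathbb{R}$ and $\phi_I^+:\mathcal{K}_I^+\to\mathbb{R}$ are $(x_k)_{k\ge1}\mapsto\sum_{k\ge1}x_k\beta^{-k}$, and $f_*(\mu)$ denotes the push-forward measure. *)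

theory Defs
  imports "HOL-Analysis.Analysis" "HOL-Probability.Probability"
    "HOL-Computational_Algebra.Polynomial" "HOL-Computational_Algebra.Factorial_Ring"
begin

definition pisot :: "real \<Rightarrow> bool" where
  "pisot \<beta> \<longleftrightarrow> \<beta> > 1 \<and>
     (\<exists>p :: int poly. lead_coeff p = 1 \<and> irreducible p \<and>
        poly (map_poly real_of_int p) \<beta> = 0 \<and>
        (\<forall>z :: complex. poly (map_poly complex_of_int p) z = 0 \<and> z \<noteq> complex_of_real \<beta>
            \<longrightarrow> cmod z < 1))"

definition label_matrix :: "('v::finite \<times> 'v) set \<Rightarrow> ('v \<times> 'v \<Rightarrow> int) \<Rightarrow> int \<Rightarrow> real^'v^'v" where
  "label_matrix E lab a = (\<chi> i j. if (i, j) \<in> E \<and> lab (i, j) = a then 1 else 0)"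

definition mat_list_prod :: "(real^'n^'n) list \<Rightarrow> real^'n^'n" where
  "mat_list_prod ms = foldr (**) ms (mat 1)"

definition primitive_matrix :: "real^'n^'n \<Rightarrow> bool" where
  "primitive_matrix M \<longleftrightarrow> (\<forall>i j. M $ i $ j \<ge> 0) \<and>
     (\<exists>k\<ge>1. \<forall>i j. mat_list_prod (replicate k M) $ i $ j > 0)"

text \<open>Sequence space A^N with product sigma-algebra (index n corresponds to x_{n+1}).\<close>
definition seq_space :: "int set \<Rightarrow> (nat \<Rightarrow> int) measure" where
  "seq_space A = PiM UNIV (\<lambda>_. count_space A)"

definition cylinder :: "int set \<Rightarrow> int list \<Rightarrow> (nat \<Rightarrow> int) set" where
  "cylinder A eps = {x \<in> space (seq_space A). \<forall>i<length eps. x i = eps ! i}"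

text \<open>Label sequences of infinite paths starting in S (K^+ for S = UNIV, K_I^+ for S = I).\<close>
definition label_seqs :: "('v \<times> 'v) set \<Rightarrow> ('v \<times> 'v \<Rightarrow> int) \<Rightarrow> 'v set \<Rightarrow> (nat \<Rightarrow> int) set" where
  "label_seqs E lab S = {x. \<exists>p :: nat \<Rightarrow> 'v. p 0 \<in> S \<and>
      (\<forall>n. (p n, p (Suc n)) \<in> E \<and> x n = lab (p n, p (Suc n)))}"

definition phi :: "real \<Rightarrow> (nat \<Rightarrow> int) \<Rightarrow> real" where
  "phi \<beta> x = (\<Sum>n. real_of_int (x n) / \<beta> ^ Suc n)"

definition abs_continuous :: "real measure \<Rightarrow> bool" where
  "abs_continuous \<nu> \<longleftrightarrow> absolutely_continuous lborel \<nu>"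

definition purely_atomic :: "real measure \<Rightarrow> bool" where
  "purely_atomic \<nu> \<longleftrightarrow> (\<exists>S. countable S \<and> emeasure \<nu> (space \<nu> - S) = 0)"

definition purely_singular_continuous :: "real measure \<Rightarrow> bool" where
  "purely_singular_continuous \<nu> \<longleftrightarrow> (\<forall>x. emeasure \<nu> {x} = 0) \<and>
     (\<exists>N \<in> sets borel. emeasure lborel N = 0 \<and> emeasure \<nu> (space \<nu> - N) = 0)"

definition atoms :: "real measure \<Rightarrow> real set" where
  "atoms \<nu> = {x. emeasure \<nu> {x} > 0}"

definition pure_measure :: "real measure \<Rightarrow> bool" where
  "pure_measure \<nu> \<longleftrightarrow> abs_continuous \<nu> \<or> purely_singular_continuous \<nu> \<or> purely_atomic \<nu>"

end

theory Submission
  imports Defs "HOL-Probability.Stream_Space" "HOL-Probability.Product_PMF"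
begin

text \<open>
  Both measures are laws of the label sequences of Parry's Markov chain on the vertices,
  \<open>P(i, j) = vR\<^sub>j / (\<lambda> vR\<^sub>i)\<close>, started from the weights \<open>u\<^sub>i vR\<^sub>i\<close> with \<open>u = vL\<close>, resp. \<open>u\<close> the
  indicator of \<open>I\<close>. Let \<open>Z\<close> be a Borel set invariant under all maps \<open>y \<mapsto> \<beta> y - a\<close>, \<open>a \<in> \<int>\<close>.
  Prepending a label \<open>a\<close> to \<open>x\<close> maps \<open>\<phi>(x)\<close> to \<open>(a + \<phi>(x)) / \<beta>\<close>, so the probability that \<open>\<phi>\<close>
  of the labels lies in \<open>Z\<close> is a harmonic function of the starting vertex, hence constant by
  primitivity (maximum principle); for the same reason the event is independent of every initial
  segment of the chain, hence has probability 0 or 1. Saturating an atom, or a Lebesgue null set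
  of positive mass, under the group generated by these maps gives such a \<open>Z\<close> that is still
  countable, resp. null: this is the trichotomy. If there is an atom, the pairs \<open>(j, x)\<close>
  maximising \<open>P\<^sub>j(\<phi> = x)\<close> form a finite set closed under moving along edges, so from each vertex
  all label sequences have the same \<open>\<phi>\<close>, which leaves at most \<open>#V\<close> values.
\<close>

lemma space_seq_space: "space (seq_space A) = {x. \<forall>n. x n \<in> A}"
  by (auto simp: seq_space_def space_PiM PiE_def extensional_def)

lemma measurable_seq_space_nth: "(\<lambda>x. x n) \<in> measurable (seq_space A) (count_space A)"
  unfolding seq_space_def by (rule measurable_component_singleton) simp

lemma cylinder_in_sets: "cylinder A eps \<in> sets (seq_space A)"
proof -
  have "cylinder A eps = {x \<in> space (seq_space A). \<forall>i\<in>{..<length eps}. x i = eps ! i}"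
    by (auto simp: cylinder_def)
  also have "\<dots> \<in> sets (seq_space A)"
  proof (intro sets.sets_Collect_finite_All)
    fix i
    have "(\<lambda>x. x i) -` ({eps ! i} \<inter> A) \<inter> space (seq_space A) \<in> sets (seq_space A)"
      by (rule measurable_sets[OF measurable_seq_space_nth]) simp
    also have "(\<lambda>x. x i) -` ({eps ! i} \<inter> A) \<inter> space (seq_space A) =
        {x \<in> space (seq_space A). x i = eps ! i}"
      by (auto simp: space_seq_space)
    finally show "{x \<in> space (seq_space A). x i = eps ! i} \<in> sets (seq_space A)" .
  qed simp
  finally show ?thesis .
qed

lemma cylinder_Nil: "cylinder A [] = space (seq_space A)"
  by (simp add: cylinder_def)

lemma cylinder_Int:
  "cylinder A u \<inter> cylinder A w =
     (if \<forall>i<min (length u) (length w). u ! i = w ! i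
      then cylinder A (if length u \<le> length w then w else u) else {})"
proof (cases "\<forall>i<min (length u) (length w). u ! i = w ! i")
  case False
  then obtain i where "i < length u" "i < length w" "u ! i \<noteq> w ! i"
    by auto
  then show ?thesis
    by (auto simp: cylinder_def)
qed (auto simp: cylinder_def)

definition cylinders :: "int set \<Rightarrow> (nat \<Rightarrow> int) set set" where
  "cylinders A = insert {} {cylinder A eps | eps. set eps \<subseteq> A}"

lemma Int_stable_cylinders: "Int_stable (cylinders A)"
proof (rule Int_stableI)
  fix X Y assume "X \<in> cylinders A" "Y \<in> cylinders A"
  then show "X \<inter> Y \<in> cylinders A"
  proof (cases "X = {} \<or> Y = {}")
    case False
    with \<open>X \<in> cylinders A\<close> \<open>Y \<in> cylinders A\<close> obtain u w
      where "X = cylinder A u" "set u \<subseteq> A" "Y = cylinder A w" "set w \<subseteq> A"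
      by (auto simp: cylinders_def)
    show ?thesis
    proof (cases "\<forall>i<min (length u) (length w). u ! i = w ! i")
      case True
      then have "X \<inter> Y = cylinder A (if length u \<le> length w then w else u)"
        using \<open>X = _\<close> \<open>Y = _\<close> by (simp add: cylinder_Int)
      then show ?thesis
        using \<open>set u \<subseteq> A\<close> \<open>set w \<subseteq> A\<close> unfolding cylinders_def
        by (intro insertI2 CollectI exI[of _ "if length u \<le> length w then w else u"]) auto
    qed (auto simp: \<open>X = _\<close> \<open>Y = _\<close> cylinder_Int cylinders_def)
  qed (auto simp: cylinders_def)
qed

lemma cylinders_subset_Pow: "cylinders A \<subseteq> Pow (space (seq_space A))"
  by (auto simp: cylinders_def cylinder_def)

lemma sets_seq_space_cylinders:
  assumes "finite A"
  shows "sets (seq_space A) = sigma_sets (space (seq_space A)) (cylinders A)"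
proof
  show "sigma_sets (space (seq_space A)) (cylinders A) \<subseteq> sets (seq_space A)"
    by (rule sets.sigma_sets_subset) (auto simp: cylinders_def cylinder_in_sets)
next
  let ?\<Omega> = "space (seq_space A)"
  interpret S: sigma_algebra ?\<Omega> "sigma_sets ?\<Omega> (cylinders A)"
    by (rule sigma_algebra_sigma_sets) (rule cylinders_subset_Pow)
  have "sets (seq_space A) = sigma_sets ?\<Omega> {{f\<in>?\<Omega>. f i \<in> X} | i X. X \<in> sets (count_space A)}"
    unfolding seq_space_def sets_PiM_single by (simp add: space_PiM)
  also have "\<dots> \<subseteq> sigma_sets ?\<Omega> (cylinders A)"
  proof (rule sigma_sets_mono, safe)
    fix i X assume X: "X \<in> sets (count_space A)"
    let ?W = "{w. set w \<subseteq> A \<and> length w = Suc i \<and> w ! i \<in> X}"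
    have "finite ?W"
      by (rule finite_subset[OF _ finite_lists_length_eq[OF \<open>finite A\<close>, of "Suc i"]]) auto
    then have "(\<Union>w\<in>?W. cylinder A w) \<in> sigma_sets ?\<Omega> (cylinders A)"
      by (intro S.finite_UN) (auto simp: cylinders_def)
    moreover have "{f\<in>?\<Omega>. f i \<in> X} = (\<Union>w\<in>?W. cylinder A w)"
    proof safe
      fix f assume f: "f \<in> ?\<Omega>" "f i \<in> X"
      then have "map f [0..<Suc i] \<in> ?W" "f \<in> cylinder A (map f [0..<Suc i])"
        by (auto simp: space_seq_space cylinder_def nth_append simp del: upt_Suc)
      then show "f \<in> (\<Union>w\<in>?W. cylinder A w)" by blast
    qed (auto simp: cylinder_def)
    ultimately show "{f\<in>?\<Omega>. f i \<in> X} \<in> sigma_sets ?\<Omega> (cylinders A)"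
      by simp
  qed
  finally show "sets (seq_space A) \<subseteq> sigma_sets ?\<Omega> (cylinders A)" .
qed

lemma measure_eqI_cylinders:
  assumes "finite A" and sets_M: "sets M = sets (seq_space A)" and sets_N: "sets N = sets (seq_space A)"
    and fin: "emeasure M (space (seq_space A)) \<noteq> \<infinity>"
    and eq: "\<And>eps. set eps \<subseteq> A \<Longrightarrow> emeasure M (cylinder A eps) = emeasure N (cylinder A eps)"
  shows "M = N"
proof (rule measure_eqI_generator_eq[OF Int_stable_cylinders cylinders_subset_Pow])
  show "sets M = sigma_sets (space (seq_space A)) (cylinders A)"
    "sets N = sigma_sets (space (seq_space A)) (cylinders A)"
    using sets_M sets_N sets_seq_space_cylinders[OF \<open>finite A\<close>] by simp_all
  show "range (\<lambda>i. space (seq_space A)) \<subseteq> cylinders A"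
    unfolding cylinder_Nil[symmetric] cylinders_def by fastforce
  show "(\<Union>i. space (seq_space A)) = space (seq_space A)"
    "emeasure M (space (seq_space A)) \<noteq> \<infinity>" for i :: nat
    using fin by simp_all
  show "emeasure M X = emeasure N X" if "X \<in> cylinders A" for X
    using that eq by (auto simp: cylinders_def)
qed

lemma summable_phi:
  assumes "finite A" "\<beta> > 1" "x \<in> space (seq_space A)"
  shows "summable (\<lambda>n. real_of_int (x n) / \<beta> ^ Suc n)"
proof (rule summable_comparison_test')
  define B where "B = (\<Sum>a\<in>A. \<bar>real_of_int a\<bar>)"
  have B: "\<bar>real_of_int (x n)\<bar> \<le> B" for n
    using assms(1,3) unfolding B_def space_seq_space
    by (intro member_le_sum[where f="\<lambda>a. \<bar>real_of_int a\<bar>"]) auto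
  show "summable (\<lambda>n. B * inverse \<beta> ^ n)"
    using \<open>\<beta> > 1\<close> by (intro summable_mult summable_geometric) (auto simp: inverse_less_1_iff)
  fix n
  have "\<bar>real_of_int (x n)\<bar> / \<beta> ^ Suc n \<le> B / \<beta> ^ Suc n"
    using B \<open>\<beta> > 1\<close> by (intro divide_right_mono) auto
  also have "\<dots> \<le> B / \<beta> ^ n"
    using \<open>\<beta> > 1\<close> B[of 0] by (intro divide_left_mono) auto
  finally show "norm (real_of_int (x n) / \<beta> ^ Suc n) \<le> B * inverse \<beta> ^ n"
    using \<open>\<beta> > 1\<close> by (simp add: abs_mult power_inverse divide_inverse_commute)
qed

lemma phi_case_nat:
  assumes "finite A" "\<beta> > 1" "y \<in> space (seq_space A)"
  shows "phi \<beta> (case_nat a y) = (real_of_int a + phi \<beta> y) / \<beta>"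
proof -
  let ?f = "\<lambda>n. real_of_int (case_nat a y n) / \<beta> ^ Suc n"
  have s: "summable (\<lambda>n. real_of_int (y n) / \<beta> ^ Suc n)"
    by (rule summable_phi[OF assms])
  have shift: "(\<lambda>n. ?f (Suc n)) = (\<lambda>n. (real_of_int (y n) / \<beta> ^ Suc n) / \<beta>)"
    by (auto simp: field_simps)
  have "summable (\<lambda>n. ?f (Suc n))"
    unfolding shift by (intro summable_divide s)
  then have "summable ?f"
    by (rule iffD1[OF summable_Suc_iff])
  then have "phi \<beta> (case_nat a y) = ?f 0 + (\<Sum>n. ?f (Suc n))"
    unfolding phi_def using suminf_split_head[OF \<open>summable ?f\<close>] by simp
  also have "(\<Sum>n. ?f (Suc n)) = phi \<beta> y / \<beta>"
    unfolding shift phi_def by (rule suminf_divide[OF s])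
  finally show ?thesis
    by (simp add: add_divide_distrib)
qed

lemma measurable_phi: "phi \<beta> \<in> borel_measurable (seq_space A)"
proof -
  have "(\<lambda>x. real_of_int (x n) / \<beta> ^ Suc n) \<in> borel_measurable (seq_space A)" for n
    by (rule measurable_compose[OF measurable_seq_space_nth]) simp
  then show ?thesis
    unfolding phi_def[abs_def] by (rule borel_measurable_suminf)
qed

text \<open>The \<open>n\<close>-th partial sum of \<open>phi \<beta> x\<close> differs from \<open>y 0\<close> by \<open>y n / \<beta>\<^sup>n\<close>.\<close>
lemma phi_eq_of_bounded_orbit:
  fixes \<beta> :: real and x :: "nat \<Rightarrow> int" and y :: "nat \<Rightarrow> real"
  assumes "\<beta> > 1"
    and orbit: "\<And>n. y (Suc n) = \<beta> * y n - real_of_int (x n)"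
    and bounded: "\<And>n. \<bar>y n\<bar> \<le> B"
  shows "phi \<beta> x = y 0"
proof -
  have partial: "(\<Sum>k<n. real_of_int (x k) / \<beta> ^ Suc k) = y 0 - y n / \<beta> ^ n" for n
  proof (induction n)
    case (Suc n)
    have "y (Suc n) / \<beta> ^ Suc n = y n / \<beta> ^ n - real_of_int (x n) / \<beta> ^ Suc n"
      using \<open>\<beta> > 1\<close> by (simp add: orbit field_simps)
    with Suc show ?case by simp
  qed simp
  have "(\<lambda>n. y n / \<beta> ^ n) \<longlonglongrightarrow> 0"
  proof (rule Lim_null_comparison)
    show "\<forall>\<^sub>F n in sequentially. norm (y n / \<beta> ^ n) \<le> B * inverse \<beta> ^ n"
    proof (intro always_eventually allI)
      fix n
      have "norm (y n / \<beta> ^ n) = \<bar>y n\<bar> / \<beta> ^ n"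
        using \<open>\<beta> > 1\<close> by (simp add: abs_of_pos)
      also have "\<dots> \<le> B / \<beta> ^ n"
        using bounded \<open>\<beta> > 1\<close> by (intro divide_right_mono) auto
      also have "\<dots> = B * inverse \<beta> ^ n"
        by (simp add: power_inverse divide_inverse)
      finally show "norm (y n / \<beta> ^ n) \<le> B * inverse \<beta> ^ n" .
    qed
    have "norm (inverse \<beta>) < 1"
      using \<open>\<beta> > 1\<close> by (simp add: inverse_less_1_iff)
    then show "(\<lambda>n. B * inverse \<beta> ^ n) \<longlonglongrightarrow> 0"
      by (intro tendsto_mult_right_zero LIMSEQ_power_zero)
  qed
  then have "(\<lambda>n. y 0 - y n / \<beta> ^ n) \<longlonglongrightarrow> y 0 - 0"
    by (intro tendsto_intros)
  then have "(\<lambda>n. real_of_int (x n) / \<beta> ^ Suc n) sums y 0"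
    unfolding sums_def partial by simp
  then show ?thesis
    unfolding phi_def by (rule sums_unique[symmetric])
qed

lemma (in prob_space) finite_heavy_atoms:
  assumes "\<epsilon> > 0"
  shows "finite {x. measure M {x} \<ge> \<epsilon>}"
proof (rule ccontr)
  assume "infinite {x. measure M {x} \<ge> \<epsilon>}"
  obtain n :: nat where n: "real n * \<epsilon> > 1"
    using reals_Archimedean3[OF \<open>\<epsilon> > 0\<close>] by blast
  obtain F where F: "finite F" "card F = n" "F \<subseteq> {x. measure M {x} \<ge> \<epsilon>}"
    using infinite_arbitrarily_large[OF \<open>infinite _\<close>] by blast
  have sets: "{x} \<in> sets M" if "x \<in> F" for x
    using F(3) that \<open>\<epsilon> > 0\<close> measure_notin_sets[of "{x}" M] by force
  have "real n * \<epsilon> = (\<Sum>x\<in>F. \<epsilon>)"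
    using F(2) by simp
  also have "\<dots> \<le> (\<Sum>x\<in>F. measure M {x})"
    using F(3) by (intro sum_mono) auto
  also have "\<dots> = measure M F"
    using F(1) sets by (intro measure_eq_sum_singleton[symmetric]) (auto simp: emeasure_eq_measure)
  also have "\<dots> \<le> 1"
    by (rule prob_le_1)
  finally show False
    using n by simp
qed

lemma null_sets_lborel_affine_vimage:
  fixes c t :: real
  assumes N: "N \<in> null_sets lborel" and "c \<noteq> 0"
  shows "(\<lambda>y. c * y + t) -` N \<in> null_sets lborel"
proof -
  have N_sets: "N \<in> sets borel"
    using N by (auto simp: null_sets_def)
  have vimage_sets: "(\<lambda>y. c * y + t) -` N \<in> sets borel"
    using measurable_sets[OF _ N_sets, of "\<lambda>y. c * y + t" borel] by simp
  have "emeasure lborel N = (\<integral>\<^sup>+x. indicator N x \<partial>lborel)"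
    using N_sets by simp
  also have "\<dots> = ennreal \<bar>c\<bar> * (\<integral>\<^sup>+x. indicator N (t + c * x) \<partial>lborel)"
    using N_sets \<open>c \<noteq> 0\<close> by (intro nn_integral_real_affine) simp_all
  also have "(\<lambda>x. indicator N (t + c * x) :: ennreal) = indicator ((\<lambda>y. c * y + t) -` N)"
    by (auto simp: indicator_def add.commute)
  finally have "emeasure lborel N = ennreal \<bar>c\<bar> * emeasure lborel ((\<lambda>y. c * y + t) -` N)"
    using vimage_sets by simp
  then show ?thesis
    using N vimage_sets \<open>c \<noteq> 0\<close> by (simp add: null_sets_def)
qed

lemma purely_atomic_imp_atom:
  assumes "prob_space \<nu>" "sets \<nu> = sets borel" "purely_atomic \<nu>"
  shows "\<exists>x. emeasure \<nu> {x} > 0"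
proof (rule ccontr)
  have space: "space \<nu> = UNIV"
    using sets_eq_imp_space_eq[OF assms(2)] by simp
  from assms(3) obtain C where C: "countable C" "emeasure \<nu> (UNIV - C) = 0"
    unfolding purely_atomic_def space by auto
  assume "\<nexists>x. emeasure \<nu> {x} > 0"
  then have "\<forall>x. {x} \<in> null_sets \<nu>"
    using assms(2) by (auto simp: null_sets_def not_less)
  then have "(\<Union>x\<in>C. {x}) \<in> null_sets \<nu>"
    by (intro null_sets_UN'[OF C(1)]) auto
  moreover have "UNIV - C \<in> null_sets \<nu>"
    using C assms(2) sets.countable[of C borel] by (auto simp: null_sets_def)
  ultimately have "(\<Union>x\<in>C. {x}) \<union> (UNIV - C) \<in> null_sets \<nu>"
    by (rule null_sets.Un)
  then show False
    using prob_space.emeasure_space_1[OF assms(1)] by (simp add: space null_sets_def)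
qed

lemma inner_indicator_pos:
  fixes v :: "real^'n"
  assumes "I \<noteq> {}" "\<forall>i. v $ i > 0"
  shows "(\<chi> i. if i \<in> I then 1 else 0) \<bullet> v > 0"
proof -
  obtain i where "i \<in> I"
    using assms(1) by blast
  then have "0 < (\<chi> i. if i \<in> I then 1 else 0) $ i * v $ i"
    using assms(2) by simp
  also have "\<dots> \<le> (\<chi> i. if i \<in> I then 1 else 0) \<bullet> v"
    unfolding inner_vec_def inner_real_def using assms(2) by (intro member_le_sum) (auto simp: less_imp_le)
  finally show ?thesis .
qed

lemma label_seqs_UNIV: "label_seqs E lab UNIV = (\<Union>i. label_seqs E lab {i})"
  by (auto simp: label_seqs_def)

definition shift_invariant :: "real \<Rightarrow> real set \<Rightarrow> bool" where
  "shift_invariant \<beta> Z \<longleftrightarrow> (\<forall>y a. y \<in> Z \<longleftrightarrow> \<beta> * y - real_of_int a \<in> Z)"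

lemma shift_invariant_vimage:
  assumes "\<beta> \<noteq> 0" "shift_invariant \<beta> Z"
  shows "(\<lambda>y. (real_of_int a + y) / \<beta>) -` Z = Z"
proof -
  have "(real_of_int a + y) / \<beta> \<in> Z \<longleftrightarrow> \<beta> * ((real_of_int a + y) / \<beta>) - real_of_int a \<in> Z" for y
    using assms(2) unfolding shift_invariant_def by blast
  then show ?thesis
    using assms(1) by auto
qed

definition laurent_int :: "real \<Rightarrow> real set" where
  "laurent_int \<beta> = range (\<lambda>l::(int \<times> int) list. sum_list (map (\<lambda>(c, e). real_of_int c * \<beta> powi e) l))"

lemma zero_in_laurent_int: "0 \<in> laurent_int \<beta>"
  unfolding laurent_int_def by (rule range_eqI[where x="[]"]) simp

lemma laurent_int_add_monomial:
  assumes "r \<in> laurent_int \<beta>"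
  shows "r + real_of_int c * \<beta> powi e \<in> laurent_int \<beta>"
proof -
  from assms obtain l where "r = sum_list (map (\<lambda>(c, e). real_of_int c * \<beta> powi e) l)"
    by (auto simp: laurent_int_def)
  then show ?thesis
    unfolding laurent_int_def by (intro range_eqI[where x="(c, e) # l"]) simp
qed

lemma countable_laurent_int: "countable (laurent_int \<beta>)"
  unfolding laurent_int_def by simp

text \<open>The group generated by the maps \<open>y \<mapsto> \<beta> y - a\<close> acts by \<open>y \<mapsto> \<beta>\<^sup>k y + r\<close> with
  \<open>r \<in> \<int>[\<beta>, \<beta>\<inverse>]\<close>; the saturation of \<open>N\<close> under it is a countable union of affine images
  of \<open>N\<close>, so it inherits countability and Lebesgue-nullness from \<open>N\<close>.\<close>
definition shift_saturation :: "real \<Rightarrow> real set \<Rightarrow> real set" where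
  "shift_saturation \<beta> N = {y. \<exists>k::int. \<exists>r\<in>laurent_int \<beta>. \<beta> powi k * y + r \<in> N}"

lemma subset_shift_saturation: "N \<subseteq> shift_saturation \<beta> N"
  unfolding shift_saturation_def
  by (auto intro!: exI[of _ "0::int"] bexI[of _ 0] zero_in_laurent_int)

lemma shift_invariant_shift_saturation:
  assumes "\<beta> \<noteq> 0"
  shows "shift_invariant \<beta> (shift_saturation \<beta> N)"
  unfolding shift_invariant_def
proof (intro allI iffI)
  fix y a
  assume "y \<in> shift_saturation \<beta> N"
  then obtain k r where "r \<in> laurent_int \<beta>" "\<beta> powi k * y + r \<in> N"
    by (auto simp: shift_saturation_def)
  moreover have "\<beta> powi (k - 1) * (\<beta> * y - real_of_int a) + (r + real_of_int a * \<beta> powi (k - 1))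
      = \<beta> powi k * y + r"
    using assms by (simp add: power_int_diff algebra_simps)
  ultimately show "\<beta> * y - real_of_int a \<in> shift_saturation \<beta> N"
    unfolding shift_saturation_def by (metis (mono_tags, lifting) laurent_int_add_monomial mem_Collect_eq)
next
  fix y a
  assume "\<beta> * y - real_of_int a \<in> shift_saturation \<beta> N"
  then obtain k r where "r \<in> laurent_int \<beta>" "\<beta> powi k * (\<beta> * y - real_of_int a) + r \<in> N"
    by (auto simp: shift_saturation_def)
  moreover have "\<beta> powi (k + 1) * y + (r + real_of_int (- a) * \<beta> powi k)
      = \<beta> powi k * (\<beta> * y - real_of_int a) + r"
    using assms by (simp add: power_int_add algebra_simps)
  ultimately show "y \<in> shift_saturation \<beta> N"
    unfolding shift_saturation_def by (metis (mono_tags, lifting) laurent_int_add_monomial mem_Collect_eq)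
qed

lemma shift_saturation_eq_UN:
  "shift_saturation \<beta> N = (\<Union>(k, r)\<in>UNIV \<times> laurent_int \<beta>. (\<lambda>y. \<beta> powi k * y + r) -` N)"
  unfolding shift_saturation_def by auto

lemma countable_shift_saturation:
  assumes "\<beta> \<noteq> 0" "countable N"
  shows "countable (shift_saturation \<beta> N)"
proof (rule countable_subset)
  show "shift_saturation \<beta> N \<subseteq> (\<lambda>(k, r, z). (z - r) / \<beta> powi k) ` (UNIV \<times> laurent_int \<beta> \<times> N)"
  proof
    fix y assume "y \<in> shift_saturation \<beta> N"
    then obtain k r where "r \<in> laurent_int \<beta>" "\<beta> powi k * y + r \<in> N"
      by (auto simp: shift_saturation_def)
    moreover have "y = ((\<beta> powi k * y + r) - r) / \<beta> powi k"
      using assms(1) by simp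
    ultimately show "y \<in> (\<lambda>(k, r, z). (z - r) / \<beta> powi k) ` (UNIV \<times> laurent_int \<beta> \<times> N)"
      by (intro image_eqI[of _ _ "(k, r, \<beta> powi k * y + r)"]) auto
  qed
  show "countable ((\<lambda>(k, r, z). (z - r) / \<beta> powi k) ` (UNIV \<times> laurent_int \<beta> \<times> N))"
    using assms(2) countable_laurent_int by auto
qed

lemma shift_saturation_in_borel:
  assumes "N \<in> sets borel"
  shows "shift_saturation \<beta> N \<in> sets borel"
  unfolding shift_saturation_eq_UN
proof (rule sets.countable_UN'')
  show "countable ((UNIV :: int set) \<times> laurent_int \<beta>)"
    by (intro countable_SIGMA countable_laurent_int) simp
  show "(case kr of (k, r) \<Rightarrow> (\<lambda>y. \<beta> powi k * y + r) -` N) \<in> sets borel" for kr :: "int \<times> real"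
    using measurable_sets[OF _ assms, of "\<lambda>y. \<beta> powi fst kr * y + snd kr" borel]
    by (cases kr) simp
qed

lemma null_sets_shift_saturation:
  assumes "\<beta> \<noteq> 0" "N \<in> null_sets lborel"
  shows "shift_saturation \<beta> N \<in> null_sets lborel"
  unfolding shift_saturation_eq_UN
proof (rule null_sets_UN')
  show "countable ((UNIV :: int set) \<times> laurent_int \<beta>)"
    by (intro countable_SIGMA countable_laurent_int) simp
  show "(case kr of (k, r) \<Rightarrow> (\<lambda>y. \<beta> powi k * y + r) -` N) \<in> null_sets lborel" for kr :: "int \<times> real"
    using null_sets_lborel_affine_vimage[OF assms(2), of "\<beta> powi fst kr" "snd kr"] assms(1)
    by (cases kr) simp
qed

lemma primitive_adjacency_imp_strongly_connected:
  fixes M :: "real^'v::finite^'v"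
  assumes adj: "\<And>i j. M $ i $ j = (if (i, j) \<in> E then 1 else 0)" and "primitive_matrix M"
  shows "(i, j) \<in> E\<^sup>*"
proof -
  have reach: "(i, j) \<in> E\<^sup>*" if "mat_list_prod (replicate k M) $ i $ j > 0" for k i j
    using that
  proof (induction k arbitrary: i)
    case 0
    then show ?case
      by (auto simp: mat_list_prod_def mat_def split: if_splits)
  next
    case (Suc k)
    have "0 < (\<Sum>l\<in>UNIV. M $ i $ l * mat_list_prod (replicate k M) $ l $ j)"
      using Suc.prems by (simp add: mat_list_prod_def matrix_matrix_mult_def)
    then obtain l where "M $ i $ l * mat_list_prod (replicate k M) $ l $ j > 0"
      by (metis (mono_tags, lifting) not_le sum_nonpos)
    then have "(i, l) \<in> E" "mat_list_prod (replicate k M) $ l $ j > 0"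
      by (auto simp: adj split: if_splits)
    then show ?case
      using Suc.IH by (blast intro: converse_rtrancl_into_rtrancl)
  qed
  obtain k where "\<forall>i j. mat_list_prod (replicate k M) $ i $ j > 0"
    using \<open>primitive_matrix M\<close> unfolding primitive_matrix_def by blast
  then show ?thesis
    using reach by blast
qed

lemma convex_combination_eq_max:
  fixes p g :: "'v::finite \<Rightarrow> real"
  assumes "\<And>j. p j \<ge> 0" "(\<Sum>j\<in>UNIV. p j) = 1" "\<And>j. g j \<le> m" "(\<Sum>j\<in>UNIV. p j * g j) = m"
    and "p j > 0"
  shows "g j = m"
proof -
  have "(\<Sum>j\<in>UNIV. p j * (m - g j)) = (\<Sum>j\<in>UNIV. p j) * m - (\<Sum>j\<in>UNIV. p j * g j)"
    by (simp add: right_diff_distrib sum_subtractf sum_distrib_right)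
  also have "\<dots> = 0"
    using assms(2,4) by simp
  finally have "p j * (m - g j) = 0"
    using assms(1,3) by (subst (asm) sum_nonneg_eq_0_iff) auto
  then show ?thesis
    using \<open>p j > 0\<close> by simp
qed

lemma harmonic_imp_const:
  fixes P :: "'v::finite \<Rightarrow> 'v \<Rightarrow> real" and f :: "'v \<Rightarrow> real"
  assumes nonneg: "\<And>i j. P i j \<ge> 0" and stochastic: "\<And>i. (\<Sum>j\<in>UNIV. P i j) = 1"
    and pos: "\<And>i j. (i, j) \<in> E \<Longrightarrow> P i j > 0" and connected: "\<And>i j. (i, j) \<in> E\<^sup>*"
    and harmonic: "\<And>i. f i = (\<Sum>j\<in>UNIV. P i j * f j)"
  shows "f i = f i'"
proof -
  define m where "m = Max (range f)"
  have le: "f j \<le> m" for j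
    unfolding m_def by simp
  obtain i0 where i0: "f i0 = m"
  proof -
    have "m \<in> range f"
      unfolding m_def by (rule Max_in) auto
    then show ?thesis
      using that by blast
  qed
  have "f j = m" if "(i0, j) \<in> E\<^sup>*" for j
    using that
  proof (induction rule: rtrancl_induct)
    case (step y z)
    have "(\<Sum>j\<in>UNIV. P y j * f j) = m"
      using harmonic[of y] step.IH by simp
    then show ?case
      using convex_combination_eq_max[of "P y" f m z] nonneg stochastic le pos[OF step.hyps(2)]
      by blast
  qed (rule i0)
  then show ?thesis
    using connected by metis
qed

locale parry_chain =
  fixes A :: "int set" and E :: "('v::finite \<times> 'v) set" and lab :: "'v \<times> 'v \<Rightarrow> int"
    and lam :: real and vR :: "real^'v"
  assumes finite_A: "finite A" and lab_in: "\<forall>e\<in>E. lab e \<in> A"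
    and lam_pos: "lam > 0" and vR_pos: "\<forall>i. vR $ i > 0"
    and vR_eigen: "(\<Sum>a\<in>A. label_matrix E lab a) *v vR = lam *\<^sub>R vR"
    and primitive: "primitive_matrix (\<Sum>a\<in>A. label_matrix E lab a)"
begin

lemma adjacency_entry: "(\<Sum>a\<in>A. label_matrix E lab a) $ i $ j = (if (i, j) \<in> E then 1 else 0)"
proof -
  have "(\<Sum>a\<in>A. label_matrix E lab a) $ i $ j = (\<Sum>a\<in>A. if (i, j) \<in> E \<and> lab (i, j) = a then 1 else 0)"
    by (simp add: label_matrix_def)
  also have "\<dots> = (if (i, j) \<in> E then 1 else 0)"
    using lab_in finite_A by auto
  finally show ?thesis .
qed

lemma strongly_connected: "(i, j) \<in> E\<^sup>*"
  by (rule primitive_adjacency_imp_strongly_connected[OF adjacency_entry primitive])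

lemma eigen_row_sum: "(\<Sum>j\<in>UNIV. if (i, j) \<in> E then vR $ j else 0) = lam * vR $ i"
proof -
  have "lam * vR $ i = ((\<Sum>a\<in>A. label_matrix E lab a) *v vR) $ i"
    using vR_eigen by simp
  also have "\<dots> = (\<Sum>j\<in>UNIV. (\<Sum>a\<in>A. label_matrix E lab a) $ i $ j * vR $ j)"
    by (simp only: matrix_vector_mult_def vec_lambda_beta)
  also have "\<dots> = (\<Sum>j\<in>UNIV. if (i, j) \<in> E then vR $ j else 0)"
    by (simp only: adjacency_entry) (rule sum.cong, auto)
  finally show ?thesis ..
qed

lemma vR_nth_pos [simp]: "vR $ i > 0"
  using vR_pos by blast

lemma vR_nth_nonzero [simp]: "vR $ i \<noteq> 0"
  using vR_nth_pos[of i] by linarith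

definition trans_prob :: "'v \<Rightarrow> 'v \<Rightarrow> real" where
  "trans_prob i j = (if (i, j) \<in> E then vR $ j / (lam * vR $ i) else 0)"

lemma trans_prob_nonneg: "trans_prob i j \<ge> 0"
  using lam_pos by (auto simp: trans_prob_def intro!: divide_nonneg_pos less_imp_le)

lemma trans_prob_pos: "(i, j) \<in> E \<Longrightarrow> trans_prob i j > 0"
  using lam_pos by (simp add: trans_prob_def)

lemma sum_trans_prob: "(\<Sum>j\<in>UNIV. trans_prob i j) = 1"
proof -
  have "(\<Sum>j\<in>UNIV. trans_prob i j) = (\<Sum>j\<in>UNIV. if (i, j) \<in> E then vR $ j else 0) / (lam * vR $ i)"
    unfolding sum_divide_distrib by (auto simp: trans_prob_def intro!: sum.cong)
  also have "\<dots> = 1"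
    using eigen_row_sum lam_pos by simp
  finally show ?thesis .
qed

definition trans_pmf :: "'v \<Rightarrow> 'v pmf" where
  "trans_pmf i = embed_pmf (trans_prob i)"

lemma pmf_trans_pmf: "pmf (trans_pmf i) j = trans_prob i j"
  unfolding trans_pmf_def
  by (rule pmf_embed_pmf)
     (auto simp: trans_prob_nonneg nn_integral_count_space_finite sum_trans_prob)

lemma set_pmf_trans_pmf: "set_pmf (trans_pmf i) = {j. (i, j) \<in> E}"
  using trans_prob_pos by (auto simp: set_pmf_eq pmf_trans_pmf trans_prob_def)

text \<open>The chain is driven by an i.i.d.\ sequence of random maps \<open>T : V \<Rightarrow> V\<close>, the value \<open>T i\<close>
  being distributed as the transition from \<open>i\<close>. Walks are then functions on the stream space of
  these maps, where the library provides the first-step decomposition and the characterisation of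
  the measure by initial segments.\<close>
definition random_map :: "('v \<Rightarrow> 'v) pmf" where
  "random_map = Pi_pmf UNIV undefined trans_pmf"

lemma map_pmf_random_map: "map_pmf (\<lambda>T. T j) random_map = trans_pmf j"
  unfolding random_map_def by (subst Pi_pmf_component) auto

lemma random_map_edge:
  assumes "T \<in> set_pmf random_map"
  shows "(j, T j) \<in> E"
proof -
  have "T j \<in> set_pmf (map_pmf (\<lambda>T. T j) random_map)"
    using assms by simp
  then show ?thesis
    by (simp add: map_pmf_random_map set_pmf_trans_pmf)
qed

lemma ex_successor: "\<exists>j. (i, j) \<in> E"
proof (rule ccontr)
  assume "\<nexists>j. (i, j) \<in> E"
  then have "(\<Sum>j\<in>UNIV. if (i, j) \<in> E then vR $ j else 0) = 0"
    by simp
  with eigen_row_sum[of i] lam_pos show False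
    by simp
qed

definition successor :: "'v \<Rightarrow> 'v" where
  "successor i = (SOME j. (i, j) \<in> E)"

lemma successor_edge: "(i, successor i) \<in> E"
  unfolding successor_def using ex_successor by (rule someI_ex)

text \<open>The fallback to \<open>successor\<close> only matters off the support of \<open>random_map\<close>; it makes
  every walk a path of the graph for every stream, not just almost surely.\<close>
definition walk_step :: "'v \<Rightarrow> ('v \<Rightarrow> 'v) \<Rightarrow> 'v" where
  "walk_step i T = (if (i, T i) \<in> E then T i else successor i)"

lemma walk_step_edge: "(i, walk_step i T) \<in> E"
  by (simp add: walk_step_def successor_edge)

lemma walk_step_random_map: "T \<in> set_pmf random_map \<Longrightarrow> walk_step i T = T i"
  by (simp add: walk_step_def random_map_edge)

primrec walk :: "'v \<Rightarrow> ('v \<Rightarrow> 'v) stream \<Rightarrow> nat \<Rightarrow> 'v" where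
  "walk j \<omega> 0 = j"
| "walk j \<omega> (Suc n) = walk_step (walk j \<omega> n) (\<omega> !! n)"

definition walk_labels :: "'v \<Rightarrow> ('v \<Rightarrow> 'v) stream \<Rightarrow> nat \<Rightarrow> int" where
  "walk_labels j \<omega> n = lab (walk j \<omega> n, walk j \<omega> (Suc n))"

lemma walk_Stream: "walk j (T ## \<omega>) (Suc n) = walk (walk_step j T) \<omega> n"
  by (induction n) auto

lemma walk_labels_Stream:
  "walk_labels j (T ## \<omega>) = case_nat (lab (j, walk_step j T)) (walk_labels (walk_step j T) \<omega>)"
proof
  show "walk_labels j (T ## \<omega>) n = case_nat (lab (j, walk_step j T)) (walk_labels (walk_step j T) \<omega>) n" for n
    by (cases n) (simp add: walk_labels_def, simp only: walk_labels_def walk_Stream nat.case)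
qed

lemma walk_edge: "(walk j \<omega> n, walk j \<omega> (Suc n)) \<in> E"
  by (simp only: walk.simps walk_step_edge)

lemma walk_labels_in_space: "walk_labels j \<omega> \<in> space (seq_space A)"
  using lab_in walk_edge by (auto simp: walk_labels_def space_seq_space)

lemma walk_labels_in_label_seqs: "walk_labels j \<omega> \<in> label_seqs E lab {j}"
  unfolding label_seqs_def walk_labels_def
  using walk_edge by (intro CollectI exI[of _ "walk j \<omega>"]) (auto simp del: walk.simps(2))

abbreviation map_streams :: "('v \<Rightarrow> 'v) stream measure" where
  "map_streams \<equiv> stream_space (measure_pmf random_map)"

sublocale walks: prob_space map_streams
  by (rule prob_space.prob_space_stream_space[OF prob_space_measure_pmf])

lemma sets_map_streams: "sets map_streams = sets (stream_space (count_space UNIV))"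
  by (rule sets_stream_space_cong) simp

lemma measurable_walk: "(\<lambda>\<omega>. walk j \<omega> n) \<in> measurable map_streams (count_space UNIV)"
proof (induction n)
  case (Suc n)
  have "(\<lambda>\<omega>. (\<lambda>i \<omega>. walk_step i (\<omega> !! n)) (walk j \<omega> n) \<omega>) \<in> measurable map_streams (count_space UNIV)"
    by (rule measurable_compose_countable'[OF _ Suc])
       (auto intro: measurable_compose[OF measurable_snth])
  then show ?case
    by simp
qed simp

lemma measurable_walk_labels_nth:
  "(\<lambda>\<omega>. walk_labels j \<omega> n) \<in> measurable map_streams (count_space A)"
proof -
  have "(\<lambda>\<omega>. (\<lambda>i \<omega>. lab (i, walk j \<omega> (Suc n))) (walk j \<omega> n) \<omega>)
      \<in> measurable map_streams (count_space UNIV)"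
  proof (rule measurable_compose_countable'[where g="\<lambda>\<omega>. walk j \<omega> n" and I=UNIV, OF _ measurable_walk])
    fix i
    have "(\<lambda>\<omega>. (\<lambda>i' \<omega>. lab (i, i')) (walk j \<omega> (Suc n)) \<omega>) \<in> measurable map_streams (count_space UNIV)"
      by (rule measurable_compose_countable'[where g="\<lambda>\<omega>. walk j \<omega> (Suc n)" and I=UNIV,
          OF _ measurable_walk]) auto
    then show "(\<lambda>\<omega>. lab (i, walk j \<omega> (Suc n))) \<in> measurable map_streams (count_space UNIV)"
      by simp
  qed auto
  then have "(\<lambda>\<omega>. walk_labels j \<omega> n) \<in> measurable map_streams (count_space UNIV)"
    by (simp add: walk_labels_def)
  then show ?thesis
    unfolding measurable_count_space_eq2_countable
    using walk_labels_in_space measurable_sets by (auto simp: space_seq_space)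
qed

lemma measurable_walk_labels: "walk_labels j \<in> measurable map_streams (seq_space A)"
  unfolding seq_space_def
  by (rule measurable_PiM_single'[where f="\<lambda>n \<omega>. walk_labels j \<omega> n", simplified])
     (use measurable_walk_labels_nth walk_labels_in_space in \<open>auto simp: space_seq_space\<close>)

lemma sets_walk_labels_pred:
  "X \<in> sets (seq_space A) \<Longrightarrow> {\<omega> \<in> space map_streams. walk_labels j \<omega> \<in> X} \<in> sets map_streams"
  using measurable_sets[OF measurable_walk_labels] by (simp add: vimage_def Int_def conj_commute)

lemma prob_walk_labels_first_step:
  assumes X: "X \<in> sets (seq_space A)"
  shows "\<P>(\<omega> in map_streams. walk_labels j \<omega> \<in> X) =
     (\<Sum>j'\<in>UNIV. trans_prob j j' * \<P>(\<omega> in map_streams. case_nat (lab (j, j')) (walk_labels j' \<omega>) \<in> X))"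
proof -
  let ?g = "\<lambda>j'. \<P>(\<omega> in map_streams. case_nat (lab (j, j')) (walk_labels j' \<omega>) \<in> X)"
  have "ennreal (\<P>(\<omega> in map_streams. walk_labels j \<omega> \<in> X)) =
      (\<integral>\<^sup>+T. ennreal (\<P>(\<omega> in map_streams. walk_labels j (T ## \<omega>) \<in> X)) \<partial>measure_pmf random_map)"
    by (rule prob_space.prob_stream_space[OF prob_space_measure_pmf sets_walk_labels_pred[OF X]])
  also have "\<dots> = (\<integral>\<^sup>+T. ennreal (?g (T j)) \<partial>measure_pmf random_map)"
    by (rule nn_integral_cong_AE) (simp add: AE_measure_pmf_iff walk_labels_Stream walk_step_random_map)
  also have "\<dots> = (\<integral>\<^sup>+j'. ennreal (?g j') \<partial>measure_pmf (trans_pmf j))"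
    by (simp flip: map_pmf_random_map)
  also have "\<dots> = ennreal (\<Sum>j'\<in>UNIV. trans_prob j j' * ?g j')"
    by (simp add: nn_integral_measure_pmf nn_integral_count_space_finite pmf_trans_pmf
        trans_prob_nonneg flip: ennreal_mult)
  finally show ?thesis
    by (simp add: sum_nonneg trans_prob_nonneg)
qed

lemma prob_walk_labels_cylinder:
  "\<P>(\<omega> in map_streams. walk_labels j \<omega> \<in> cylinder A eps) =
     (mat_list_prod (map (label_matrix E lab) eps) *v vR) $ j / (lam ^ length eps * vR $ j)"
proof (induction eps arbitrary: j)
  case Nil
  have "{\<omega> \<in> space map_streams. walk_labels j \<omega> \<in> cylinder A []} = space map_streams"
    using walk_labels_in_space by (auto simp: cylinder_def)
  then show ?case
    by (simp add: walks.prob_space mat_list_prod_def)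
next
  case (Cons a w)
  let ?v = "mat_list_prod (map (label_matrix E lab) w) *v vR"
  have summand: "trans_prob j j' *
        \<P>(\<omega> in map_streams. case_nat (lab (j, j')) (walk_labels j' \<omega>) \<in> cylinder A (a # w)) =
      label_matrix E lab a $ j $ j' * ?v $ j' / (lam ^ length (a # w) * vR $ j)" for j'
  proof (cases "(j, j') \<in> E")
    case True
    then have "lab (j, j') \<in> A"
      using lab_in by auto
    then have "{\<omega> \<in> space map_streams. case_nat (lab (j, j')) (walk_labels j' \<omega>) \<in> cylinder A (a # w)} =
        (if lab (j, j') = a then {\<omega> \<in> space map_streams. walk_labels j' \<omega> \<in> cylinder A w} else {})"
      using walk_labels_in_space by (auto simp: cylinder_def space_seq_space nth_Cons split: nat.splits)
    then have prob_eq: "\<P>(\<omega> in map_streams. case_nat (lab (j, j')) (walk_labels j' \<omega>) \<in> cylinder A (a # w)) =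
        (if lab (j, j') = a then ?v $ j' / (lam ^ length w * vR $ j') else 0)"
      by (simp add: Cons.IH)
    show ?thesis
      unfolding prob_eq using True lam_pos by (simp add: trans_prob_def label_matrix_def field_simps)
  qed (simp add: trans_prob_def label_matrix_def)
  have "\<P>(\<omega> in map_streams. walk_labels j \<omega> \<in> cylinder A (a # w)) =
      (\<Sum>j'\<in>UNIV. label_matrix E lab a $ j $ j' * ?v $ j') / (lam ^ length (a # w) * vR $ j)"
    by (simp add: prob_walk_labels_first_step[OF cylinder_in_sets] summand sum_divide_distrib)
  also have "(\<Sum>j'\<in>UNIV. label_matrix E lab a $ j $ j' * ?v $ j') = (label_matrix E lab a *v ?v) $ j"
    by (simp only: matrix_vector_mult_def vec_lambda_beta)
  also have "label_matrix E lab a *v ?v = mat_list_prod (map (label_matrix E lab) (a # w)) *v vR"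
    by (simp add: mat_list_prod_def matrix_vector_mul_assoc)
  finally show ?case .
qed

text \<open>For \<open>u = vL\<close> with \<open>vL \<bullet> vR = 1\<close> this is the stationary distribution of the chain.\<close>
definition start_weight :: "real^'v \<Rightarrow> 'v \<Rightarrow> real" where
  "start_weight u j = u $ j * vR $ j / (u \<bullet> vR)"

lemma start_weight_nonneg:
  assumes "\<forall>i. u $ i \<ge> 0" "u \<bullet> vR > 0"
  shows "start_weight u j \<ge> 0"
  unfolding start_weight_def using assms
  by (intro divide_nonneg_pos mult_nonneg_nonneg) (auto simp: less_imp_le)

lemma sum_start_weight:
  assumes "u \<bullet> vR > 0"
  shows "(\<Sum>j\<in>UNIV. start_weight u j) = 1"
  using assms by (simp add: start_weight_def inner_vec_def flip: sum_divide_distrib)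

definition walk_mixture :: "real^'v \<Rightarrow> (nat \<Rightarrow> int) measure" where
  "walk_mixture u = measure_pmf (embed_pmf (start_weight u)) \<bind>
     (\<lambda>j. distr map_streams (seq_space A) (walk_labels j))"

lemma sets_walk_mixture: "sets (walk_mixture u) = sets (seq_space A)"
  unfolding walk_mixture_def by (rule sets_bind) auto

lemma emeasure_walk_mixture:
  assumes "\<forall>i. u $ i \<ge> 0" "u \<bullet> vR > 0" and Y: "Y \<in> sets (seq_space A)"
  shows "emeasure (walk_mixture u) Y =
    ennreal (\<Sum>j\<in>UNIV. start_weight u j * \<P>(\<omega> in map_streams. walk_labels j \<omega> \<in> Y))"
proof -
  note nonneg = start_weight_nonneg[OF assms(1,2)]
  have pmf_start: "pmf (embed_pmf (start_weight u)) j = start_weight u j" for j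
    using sum_start_weight[OF assms(2)]
    by (intro pmf_embed_pmf) (auto simp: nonneg nn_integral_count_space_finite)
  have kernel: "(\<lambda>j. distr map_streams (seq_space A) (walk_labels j))
      \<in> measurable (measure_pmf (embed_pmf (start_weight u))) (subprob_algebra (seq_space A))"
    using walks.prob_space_distr[OF measurable_walk_labels]
    by (auto simp: space_subprob_algebra prob_space_imp_subprob_space)
  have "emeasure (walk_mixture u) Y = (\<integral>\<^sup>+j. emeasure (distr map_streams (seq_space A) (walk_labels j)) Y
      \<partial>measure_pmf (embed_pmf (start_weight u)))"
    unfolding walk_mixture_def by (rule emeasure_bind[OF _ kernel Y]) simp
  also have "\<dots> = ennreal (\<Sum>j\<in>UNIV. start_weight u j * \<P>(\<omega> in map_streams. walk_labels j \<omega> \<in> Y))"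
    using Y
    by (simp add: nn_integral_measure_pmf nn_integral_count_space_finite pmf_start
        emeasure_distr[OF measurable_walk_labels] walks.emeasure_eq_measure vimage_def Int_def
        conj_commute nonneg flip: ennreal_mult)
  finally show ?thesis .
qed

lemma emeasure_walk_mixture_cylinder:
  assumes "\<forall>i. u $ i \<ge> 0" "u \<bullet> vR > 0" "set eps \<subseteq> A"
  shows "emeasure (walk_mixture u) (cylinder A eps) =
    ennreal (lam powi (- int (length eps)) *
      (u \<bullet> (mat_list_prod (map (label_matrix E lab) eps) *v vR)) / (u \<bullet> vR))"
proof -
  let ?v = "mat_list_prod (map (label_matrix E lab) eps) *v vR" and ?L = "lam ^ length eps"
  have "(\<Sum>j\<in>UNIV. start_weight u j * (?v $ j / (?L * vR $ j))) =
      (\<Sum>j\<in>UNIV. u $ j * ?v $ j / (?L * (u \<bullet> vR)))"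
    using lam_pos assms(2) by (intro sum.cong refl) (simp add: start_weight_def field_simps)
  also have "\<dots> = (u \<bullet> ?v) / (?L * (u \<bullet> vR))"
    by (simp add: inner_vec_def[of u ?v] sum_divide_distrib)
  also have "\<dots> = lam powi (- int (length eps)) * (u \<bullet> ?v) / (u \<bullet> vR)"
    by (simp add: power_int_minus divide_inverse mult_ac)
  finally show ?thesis
    by (simp add: emeasure_walk_mixture[OF assms(1,2) cylinder_in_sets] prob_walk_labels_cylinder)
qed

lemma eq_walk_mixture:
  fixes \<rho> :: "(nat \<Rightarrow> int) measure"
  assumes "sets \<rho> = sets (seq_space A)" "\<forall>i. u $ i \<ge> 0" "u \<bullet> vR > 0"
    and cyl: "\<forall>eps. set eps \<subseteq> A \<longrightarrow> emeasure \<rho> (cylinder A eps) =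
        ennreal (lam powi (- int (length eps)) *
                 (u \<bullet> (mat_list_prod (map (label_matrix E lab) eps) *v vR)) / (u \<bullet> vR))"
  shows "\<rho> = walk_mixture u"
proof (rule measure_eqI_cylinders[OF finite_A assms(1) sets_walk_mixture])
  show "emeasure \<rho> (space (seq_space A)) \<noteq> \<infinity>"
    using cyl by (simp flip: cylinder_Nil)
  show "emeasure \<rho> (cylinder A eps) = emeasure (walk_mixture u) (cylinder A eps)" if "set eps \<subseteq> A" for eps
    using cyl that by (simp add: emeasure_walk_mixture_cylinder[OF assms(2,3) that])
qed

lemma prob_sstart_Cons:
  "\<P>(\<omega> in map_streams. \<omega> \<in> sstart UNIV (T # t) \<and> P \<omega>) =
    pmf random_map T * \<P>(\<omega> in map_streams. \<omega> \<in> sstart UNIV t \<and> P (T ## \<omega>))"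
  if "{\<omega> \<in> space map_streams. P \<omega>} \<in> sets map_streams"
proof -
  have "sstart UNIV (T # t) \<in> sets map_streams"
    unfolding sets_map_streams by (rule sets_sstart)
  then have "sstart UNIV (T # t) \<inter> {\<omega> \<in> space map_streams. P \<omega>} \<in> sets map_streams"
    using that by (rule sets.Int)
  also have "sstart UNIV (T # t) \<inter> {\<omega> \<in> space map_streams. P \<omega>} =
      {\<omega> \<in> space map_streams. \<omega> \<in> sstart UNIV (T # t) \<and> P \<omega>}"
    by blast
  finally have "ennreal (\<P>(\<omega> in map_streams. \<omega> \<in> sstart UNIV (T # t) \<and> P \<omega>)) =
      (\<integral>\<^sup>+T'. ennreal (\<P>(\<omega> in map_streams. T' ## \<omega> \<in> sstart UNIV (T # t) \<and> P (T' ## \<omega>)))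
        \<partial>measure_pmf random_map)"
    by (rule prob_space.prob_stream_space[OF prob_space_measure_pmf])
  also have "\<dots> = (\<integral>\<^sup>+T'. ennreal (\<P>(\<omega> in map_streams. \<omega> \<in> sstart UNIV t \<and> P (T ## \<omega>))) * indicator {T} T'
        \<partial>measure_pmf random_map)"
    by (intro nn_integral_cong) (auto split: split_indicator)
  also have "\<dots> = ennreal (\<P>(\<omega> in map_streams. \<omega> \<in> sstart UNIV t \<and> P (T ## \<omega>)) * pmf random_map T)"
    by (simp add: nn_integral_cmult_indicator emeasure_pmf_single ennreal_mult)
  finally show ?thesis
    by (simp add: mult.commute)
qed

end

locale parry_expansion = parry_chain A E lab lam vR
  for A :: "int set" and E :: "('v::finite \<times> 'v) set" and lab lam vR +
  fixes \<beta> :: real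
  assumes beta_gt_1: "\<beta> > 1"
begin

lemma beta_nonzero: "\<beta> \<noteq> 0"
  using beta_gt_1 by simp

definition hit_prob :: "real set \<Rightarrow> 'v \<Rightarrow> real" where
  "hit_prob Z j = \<P>(\<omega> in map_streams. phi \<beta> (walk_labels j \<omega>) \<in> Z)"

lemma hit_prob_nonneg: "hit_prob Z j \<ge> 0"
  by (simp add: hit_prob_def)

lemma sets_phi_walk_labels_pred:
  "Z \<in> sets borel \<Longrightarrow> {\<omega> \<in> space map_streams. phi \<beta> (walk_labels j \<omega>) \<in> Z} \<in> sets map_streams"
  using measurable_sets[OF measurable_compose[OF measurable_walk_labels measurable_phi]]
  by (simp add: vimage_def Int_def conj_commute)

lemma hit_prob_first_step:
  assumes "Z \<in> sets borel"
  shows "hit_prob Z j =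
    (\<Sum>j'\<in>UNIV. trans_prob j j' * hit_prob ((\<lambda>y. (real_of_int (lab (j, j')) + y) / \<beta>) -` Z) j')"
proof -
  let ?X = "{x \<in> space (seq_space A). phi \<beta> x \<in> Z}"
  have X: "?X \<in> sets (seq_space A)"
    using measurable_sets[OF measurable_phi assms] by (simp add: vimage_def Int_def conj_commute)
  have "hit_prob Z j = \<P>(\<omega> in map_streams. walk_labels j \<omega> \<in> ?X)"
    unfolding hit_prob_def using walk_labels_in_space by simp
  also have "\<dots> = (\<Sum>j'\<in>UNIV. trans_prob j j' *
      \<P>(\<omega> in map_streams. case_nat (lab (j, j')) (walk_labels j' \<omega>) \<in> ?X))"
    by (rule prob_walk_labels_first_step[OF X])
  also have "\<dots> =
      (\<Sum>j'\<in>UNIV. trans_prob j j' * hit_prob ((\<lambda>y. (real_of_int (lab (j, j')) + y) / \<beta>) -` Z) j')"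
  proof (intro sum.cong refl)
    fix j'
    show "trans_prob j j' * \<P>(\<omega> in map_streams. case_nat (lab (j, j')) (walk_labels j' \<omega>) \<in> ?X) =
        trans_prob j j' * hit_prob ((\<lambda>y. (real_of_int (lab (j, j')) + y) / \<beta>) -` Z) j'"
    proof (cases "(j, j') \<in> E")
      case True
      then have "lab (j, j') \<in> A"
        using lab_in by auto
      then have "case_nat (lab (j, j')) (walk_labels j' \<omega>) \<in> ?X \<longleftrightarrow>
          phi \<beta> (walk_labels j' \<omega>) \<in> (\<lambda>y. (real_of_int (lab (j, j')) + y) / \<beta>) -` Z" for \<omega>
        using walk_labels_in_space[of j' \<omega>] phi_case_nat[OF finite_A beta_gt_1 walk_labels_in_space]
        by (auto simp: space_seq_space split: nat.splits)
      then show ?thesis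
        unfolding hit_prob_def by simp
    qed (simp add: trans_prob_def)
  qed
  finally show ?thesis .
qed

lemma hit_prob_invariant_const:
  assumes "Z \<in> sets borel" "shift_invariant \<beta> Z"
  shows "hit_prob Z j = hit_prob Z j'"
proof (rule harmonic_imp_const[where P=trans_prob and E=E])
  show "hit_prob Z i = (\<Sum>j\<in>UNIV. trans_prob i j * hit_prob Z j)" for i
    by (subst hit_prob_first_step[OF assms(1)]) (simp add: shift_invariant_vimage[OF beta_nonzero assms(2)])
qed (simp_all add: trans_prob_nonneg sum_trans_prob trans_prob_pos strongly_connected)

text \<open>Since \<open>Z\<close> is invariant, whether \<open>phi\<close> of the labels lands in \<open>Z\<close> does not depend on the
  first maps of the stream, only on the vertex they lead to, and \<open>hit_prob Z\<close> is the same for all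
  vertices.\<close>
lemma prob_sstart_hit:
  assumes Z: "Z \<in> sets borel" "shift_invariant \<beta> Z"
  shows "\<P>(\<omega> in map_streams. \<omega> \<in> sstart UNIV t \<and> phi \<beta> (walk_labels j \<omega>) \<in> Z) =
    \<P>(\<omega> in map_streams. \<omega> \<in> sstart UNIV t) * hit_prob Z j"
proof (induction t arbitrary: j)
  case Nil
  then show ?case
    by (simp add: hit_prob_def walks.prob_space)
next
  case (Cons T t)
  have invariance: "phi \<beta> (walk_labels j (T ## \<omega>)) \<in> Z \<longleftrightarrow> phi \<beta> (walk_labels (walk_step j T) \<omega>) \<in> Z" for \<omega>
    using lab_in walk_step_edge[of j T]
      phi_case_nat[OF finite_A beta_gt_1 walk_labels_in_space, of "lab (j, walk_step j T)"]
      shift_invariant_vimage[OF beta_nonzero Z(2), of "lab (j, walk_step j T)"]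
    by (auto simp: walk_labels_Stream)
  have "\<P>(\<omega> in map_streams. \<omega> \<in> sstart UNIV (T # t) \<and> phi \<beta> (walk_labels j \<omega>) \<in> Z) =
      pmf random_map T * \<P>(\<omega> in map_streams. \<omega> \<in> sstart UNIV t \<and> phi \<beta> (walk_labels (walk_step j T) \<omega>) \<in> Z)"
    using prob_sstart_Cons[OF sets_phi_walk_labels_pred[OF Z(1)], where T=T and t=t] by (simp only: invariance)
  also have "\<dots> = pmf random_map T * \<P>(\<omega> in map_streams. \<omega> \<in> sstart UNIV t) * hit_prob Z j"
    by (simp add: Cons.IH hit_prob_invariant_const[OF Z, of "walk_step j T" j])
  also have "pmf random_map T * \<P>(\<omega> in map_streams. \<omega> \<in> sstart UNIV t) =
      \<P>(\<omega> in map_streams. \<omega> \<in> sstart UNIV (T # t))"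
    using prob_sstart_Cons[of "\<lambda>_. True" T t] by simp
  finally show ?case .
qed

text \<open>Conditioning on the event that \<open>phi\<close> of the labels lies in \<open>Z\<close> does not change the
  probabilities of initial segments, hence does not change the measure at all.\<close>
lemma uniform_measure_hit_eq:
  assumes Z: "Z \<in> sets borel" "shift_invariant \<beta> Z" and pos: "hit_prob Z j > 0"
  shows "uniform_measure map_streams {\<omega> \<in> space map_streams. phi \<beta> (walk_labels j \<omega>) \<in> Z} = map_streams"
    (is "uniform_measure map_streams ?Y = map_streams")
proof (rule stream_space_eq_sstart[of UNIV])
  have Y: "?Y \<in> sets map_streams"
    by (rule sets_phi_walk_labels_pred[OF Z(1)])
  have emeasure_Y: "emeasure map_streams ?Y = ennreal (hit_prob Z j)"
    by (simp add: hit_prob_def walks.emeasure_eq_measure)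
  show "prob_space (uniform_measure map_streams ?Y)"
    using emeasure_Y pos by (intro prob_space_uniform_measure) auto
  show "sets (uniform_measure map_streams ?Y) = sets (stream_space (count_space UNIV))"
    by (simp add: sets_map_streams)
  fix xs :: "('v \<Rightarrow> 'v) list"
  have xs: "sstart UNIV xs \<in> sets map_streams"
    unfolding sets_map_streams by (rule sets_sstart)
  have "?Y \<inter> sstart UNIV xs = {\<omega> \<in> space map_streams. \<omega> \<in> sstart UNIV xs \<and> phi \<beta> (walk_labels j \<omega>) \<in> Z}"
    by auto
  then have "measure map_streams (?Y \<inter> sstart UNIV xs) = measure map_streams (sstart UNIV xs) * hit_prob Z j"
    using prob_sstart_hit[OF Z, of xs j] by (simp add: space_stream_space del: in_sstart)
  then have "emeasure (uniform_measure map_streams ?Y) (sstart UNIV xs) =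
      ennreal (measure map_streams (sstart UNIV xs) * hit_prob Z j) / ennreal (hit_prob Z j)"
    using Y xs emeasure_Y by (simp add: walks.emeasure_eq_measure)
  also have "\<dots> = emeasure map_streams (sstart UNIV xs)"
    using pos by (simp add: divide_ennreal walks.emeasure_eq_measure)
  finally show "emeasure (uniform_measure map_streams ?Y) (sstart UNIV xs) = emeasure map_streams (sstart UNIV xs)" .
qed (simp_all add: sets_map_streams walks.prob_space_axioms)

lemma hit_prob_zero_or_one:
  assumes Z: "Z \<in> sets borel" "shift_invariant \<beta> Z"
  shows "hit_prob Z j = 0 \<or> hit_prob Z j = 1"
proof (cases "hit_prob Z j = 0")
  case False
  then have pos: "hit_prob Z j > 0"
    using hit_prob_nonneg[of Z j] by linarith
  define Y where "Y = {\<omega> \<in> space map_streams. phi \<beta> (walk_labels j \<omega>) \<in> Z}"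
  have Y: "Y \<in> sets map_streams"
    unfolding Y_def by (rule sets_phi_walk_labels_pred[OF Z(1)])
  have "emeasure map_streams (space map_streams - Y) =
      emeasure (uniform_measure map_streams Y) (space map_streams - Y)"
    unfolding Y_def uniform_measure_hit_eq[OF Z pos] ..
  also have "\<dots> = 0"
    using Y by (subst emeasure_uniform_measure) auto
  finally have "walks.prob (space map_streams - Y) = 0"
    by (simp add: walks.emeasure_eq_measure)
  then show ?thesis
    using walks.prob_compl[OF Y] by (simp add: Y_def hit_prob_def)
qed simp

lemma hit_prob_singleton_first_step:
  "hit_prob {x} j = (\<Sum>j'\<in>UNIV. trans_prob j j' * hit_prob {\<beta> * x - real_of_int (lab (j, j'))} j')"
proof -
  have "(\<lambda>y. (real_of_int a + y) / \<beta>) -` {x} = {\<beta> * x - real_of_int a}" for a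
    using beta_nonzero by (auto simp: field_simps)
  then show ?thesis
    by (subst hit_prob_first_step) simp_all
qed

lemma finite_heavy_hit_atoms:
  assumes "\<epsilon> > 0"
  shows "finite {x. hit_prob {x} j \<ge> \<epsilon>}"
proof -
  let ?f = "\<lambda>\<omega>. phi \<beta> (walk_labels j \<omega>)"
  have f: "?f \<in> borel_measurable map_streams"
    by (rule measurable_compose[OF measurable_walk_labels measurable_phi])
  have "hit_prob {x} j = measure (distr map_streams borel ?f) {x}" for x
    unfolding hit_prob_def
    by (subst measure_distr[OF f]) (auto intro!: arg_cong[where f="measure map_streams"])
  moreover have "finite {x. measure (distr map_streams borel ?f) {x} \<ge> \<epsilon>}"
    by (rule prob_space.finite_heavy_atoms[OF walks.prob_space_distr[OF f] assms])
  ultimately show ?thesis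
    by simp
qed

lemma phi_path_labels_eq:
  assumes "finite S"
    and closed: "\<And>j x j'. (j, x) \<in> S \<Longrightarrow> (j, j') \<in> E \<Longrightarrow> (j', \<beta> * x - real_of_int (lab (j, j'))) \<in> S"
    and path: "\<And>n. (p n, p (Suc n)) \<in> E" and start: "(p 0, x) \<in> S"
  shows "phi \<beta> (\<lambda>n. lab (p n, p (Suc n))) = x"
proof -
  define y where "y = rec_nat x (\<lambda>n y. \<beta> * y - real_of_int (lab (p n, p (Suc n))))"
  have y_in: "(p n, y n) \<in> S" for n
    by (induction n) (auto simp: y_def start intro: closed path)
  have "\<bar>y n\<bar> \<le> Max ((\<lambda>z. \<bar>snd z\<bar>) ` S)" for n
    using \<open>finite S\<close> y_in[of n] by (intro Max_ge) (auto intro: image_eqI[of _ _ "(p n, y n)"])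
  then have "phi \<beta> (\<lambda>n. lab (p n, p (Suc n))) = y 0"
    by (intro phi_eq_of_bounded_orbit[OF beta_gt_1]) (simp_all add: y_def)
  then show ?thesis
    by (simp add: y_def)
qed

text \<open>Only finitely many pairs carry at least the mass of a given atom, so the maximum is attained.\<close>
lemma hit_prob_singleton_max:
  assumes "hit_prob {x0} j0 > 0"
  obtains m where "\<And>j x. hit_prob {x} j \<le> m" "finite {(j, x). hit_prob {x} j = m}"
    and "\<exists>j x. hit_prob {x} j = m"
proof -
  define H where "H = (SIGMA j:UNIV. {x. hit_prob {x} j \<ge> hit_prob {x0} j0})"
  have "finite H"
    unfolding H_def using finite_heavy_hit_atoms[OF assms] by (intro finite_SigmaI) auto
  have "(j0, x0) \<in> H"
    by (simp add: H_def)
  define m where "m = Max ((\<lambda>(j, x). hit_prob {x} j) ` H)"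
  have m_ge: "hit_prob {x0} j0 \<le> m"
    unfolding m_def using \<open>finite H\<close> \<open>(j0, x0) \<in> H\<close> by (intro Max_ge) (auto intro: rev_image_eqI)
  have "hit_prob {x} j \<le> m" for j x
  proof (cases "(j, x) \<in> H")
    case True
    then show ?thesis
      unfolding m_def using \<open>finite H\<close> by (intro Max_ge) (auto intro: rev_image_eqI)
  qed (use m_ge in \<open>simp add: H_def\<close>)
  moreover have "{(j, x). hit_prob {x} j = m} \<subseteq> H"
    using m_ge by (auto simp: H_def)
  then have "finite {(j, x). hit_prob {x} j = m}"
    using \<open>finite H\<close> by (rule finite_subset)
  moreover have "m \<in> (\<lambda>(j, x). hit_prob {x} j) ` H"
    unfolding m_def using \<open>finite H\<close> \<open>(j0, x0) \<in> H\<close> by (intro Max_in) auto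
  then have "\<exists>j x. hit_prob {x} j = m"
    by auto
  ultimately show ?thesis
    by (rule that)
qed

text \<open>By the maximum principle, the set of maximisers is closed under moves along edges.\<close>
lemma maximal_atoms_closed:
  assumes "hit_prob {x0} j0 > 0"
  obtains S where "finite S" "\<And>i. \<exists>x. (i, x) \<in> S"
    and "\<And>j x j'. (j, x) \<in> S \<Longrightarrow> (j, j') \<in> E \<Longrightarrow> (j', \<beta> * x - real_of_int (lab (j, j'))) \<in> S"
proof -
  obtain m where le_m: "\<And>j x. hit_prob {x} j \<le> m" and fin: "finite {(j, x). hit_prob {x} j = m}"
    and "\<exists>j x. hit_prob {x} j = m"
    using hit_prob_singleton_max[OF assms] by blast
  define S where "S = {(j, x). hit_prob {x} j = m}"
  obtain j1 x1 where "(j1, x1) \<in> S"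
    using \<open>\<exists>j x. _\<close> by (auto simp: S_def)
  have closed: "(j', \<beta> * x - real_of_int (lab (j, j'))) \<in> S" if "(j, x) \<in> S" "(j, j') \<in> E" for j x j'
    using convex_combination_eq_max[of "trans_prob j" "\<lambda>j'. hit_prob {\<beta> * x - real_of_int (lab (j, j'))} j'" m j']
      trans_prob_nonneg sum_trans_prob le_m trans_prob_pos[OF that(2)] that(1)
      hit_prob_singleton_first_step[of x j]
    by (simp add: S_def)
  have meets_all: "\<exists>x. (i, x) \<in> S" for i
    using strongly_connected[of j1 i]
  proof (induction rule: rtrancl_induct)
    case base
    then show ?case
      using \<open>(j1, x1) \<in> S\<close> by blast
  next
    case (step i i')
    then show ?case
      using closed by blast
  qed
  show ?thesis
    using fin meets_all closed unfolding S_def[symmetric] by (rule that)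
qed

lemma phi_label_seqs_determined:
  assumes "hit_prob {x0} j0 > 0"
  obtains c where "\<And>i l. l \<in> label_seqs E lab {i} \<Longrightarrow> phi \<beta> l = c i"
proof -
  obtain S where S: "finite S" "\<And>i. \<exists>x. (i, x) \<in> S"
    and closed: "\<And>j x j'. (j, x) \<in> S \<Longrightarrow> (j, j') \<in> E \<Longrightarrow> (j', \<beta> * x - real_of_int (lab (j, j'))) \<in> S"
    using maximal_atoms_closed[OF assms] by blast
  have c: "(i, SOME x. (i, x) \<in> S) \<in> S" for i
    using S(2) by (rule someI_ex)
  show ?thesis
  proof (rule that)
    fix i l
    assume "l \<in> label_seqs E lab {i}"
    then obtain p where "p 0 = i" "\<And>n. (p n, p (Suc n)) \<in> E" "l = (\<lambda>n. lab (p n, p (Suc n)))"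
      by (auto simp: label_seqs_def)
    then show "phi \<beta> l = (SOME x. (i, x) \<in> S)"
      using phi_path_labels_eq[OF S(1) closed] c by blast
  qed
qed

context
  fixes \<rho> :: "(nat \<Rightarrow> int) measure" and u :: "real^'v"
  assumes sets_\<rho>: "sets \<rho> = sets (seq_space A)" and u_nonneg: "\<forall>i. u $ i \<ge> 0"
    and u_vR_pos: "u \<bullet> vR > 0"
    and cylinder_\<rho>: "\<forall>eps. set eps \<subseteq> A \<longrightarrow> emeasure \<rho> (cylinder A eps) =
        ennreal (lam powi (- int (length eps)) *
                 (u \<bullet> (mat_list_prod (map (label_matrix E lab) eps) *v vR)) / (u \<bullet> vR))"
begin

lemma emeasure_distr_phi:
  assumes "Z \<in> sets borel"
  shows "emeasure (distr \<rho> borel (phi \<beta>)) Z = ennreal (\<Sum>j\<in>UNIV. start_weight u j * hit_prob Z j)"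
proof -
  have phi: "phi \<beta> \<in> measurable (walk_mixture u) borel"
    using measurable_phi by (simp add: measurable_cong_sets[OF sets_walk_mixture refl])
  have "emeasure (distr \<rho> borel (phi \<beta>)) Z = emeasure (walk_mixture u) (phi \<beta> -` Z \<inter> space (walk_mixture u))"
    unfolding eq_walk_mixture[OF sets_\<rho> u_nonneg u_vR_pos cylinder_\<rho>] by (rule emeasure_distr[OF phi assms])
  also have "\<dots> = emeasure (walk_mixture u) {x \<in> space (seq_space A). phi \<beta> x \<in> Z}"
    using sets_eq_imp_space_eq[OF sets_walk_mixture] by (simp add: vimage_def Int_def conj_commute)
  also have "\<dots> = ennreal (\<Sum>j\<in>UNIV. start_weight u j * hit_prob Z j)"
    using measurable_sets[OF measurable_phi assms] walk_labels_in_space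
    by (subst emeasure_walk_mixture[OF u_nonneg u_vR_pos])
       (simp_all add: hit_prob_def vimage_def Int_def conj_commute)
  finally show ?thesis .
qed

lemma prob_space_distr_phi: "prob_space (distr \<rho> borel (phi \<beta>))"
  by (rule prob_spaceI)
     (simp add: emeasure_distr_phi hit_prob_def walks.prob_space sum_start_weight[OF u_vR_pos])

lemma emeasure_compl_shift_saturation:
  assumes "N \<in> sets borel" "emeasure (distr \<rho> borel (phi \<beta>)) N > 0"
  shows "emeasure (distr \<rho> borel (phi \<beta>)) (UNIV - shift_saturation \<beta> N) = 0"
proof -
  interpret \<nu>: prob_space "distr \<rho> borel (phi \<beta>)"
    by (rule prob_space_distr_phi)
  let ?Z = "shift_saturation \<beta> N"
  have Z: "?Z \<in> sets borel" "shift_invariant \<beta> ?Z"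
    using assms(1) beta_nonzero by (simp_all add: shift_saturation_in_borel shift_invariant_shift_saturation)
  obtain j0 :: 'v where True
    by blast
  have "emeasure (distr \<rho> borel (phi \<beta>)) ?Z = ennreal (\<Sum>j\<in>UNIV. start_weight u j * hit_prob ?Z j)"
    by (rule emeasure_distr_phi[OF Z(1)])
  also have "(\<Sum>j\<in>UNIV. start_weight u j * hit_prob ?Z j) = (\<Sum>j\<in>UNIV. start_weight u j) * hit_prob ?Z j0"
    unfolding sum_distrib_right by (intro sum.cong refl arg_cong2[where f="(*)"] hit_prob_invariant_const[OF Z])
  also have "\<dots> = hit_prob ?Z j0"
    by (simp add: sum_start_weight[OF u_vR_pos])
  finally have Z_eq: "emeasure (distr \<rho> borel (phi \<beta>)) ?Z = ennreal (hit_prob ?Z j0)" .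
  have "emeasure (distr \<rho> borel (phi \<beta>)) N \<le> emeasure (distr \<rho> borel (phi \<beta>)) ?Z"
    using Z(1) subset_shift_saturation by (intro emeasure_mono) auto
  then have "hit_prob ?Z j0 \<noteq> 0"
    using assms(2) Z_eq by auto
  then have "emeasure (distr \<rho> borel (phi \<beta>)) ?Z = 1"
    using hit_prob_zero_or_one[OF Z, of j0] Z_eq by simp
  then show ?thesis
    using emeasure_compl[of ?Z "distr \<rho> borel (phi \<beta>)"] Z(1) \<nu>.emeasure_space_1 by simp
qed

lemma pure_measure_distr_phi: "pure_measure (distr \<rho> borel (phi \<beta>))"
proof (cases "\<exists>x. emeasure (distr \<rho> borel (phi \<beta>)) {x} > 0")
  case True
  then obtain x where "emeasure (distr \<rho> borel (phi \<beta>)) {x} > 0"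
    by blast
  then have "emeasure (distr \<rho> borel (phi \<beta>)) (UNIV - shift_saturation \<beta> {x}) = 0"
    by (intro emeasure_compl_shift_saturation) simp
  moreover have "countable (shift_saturation \<beta> {x})"
    using beta_nonzero by (simp add: countable_shift_saturation)
  ultimately show ?thesis
    unfolding pure_measure_def purely_atomic_def by auto
next
  case False
  show ?thesis
  proof (cases "abs_continuous (distr \<rho> borel (phi \<beta>))")
    case False
    then obtain N where N: "N \<in> null_sets lborel" "N \<notin> null_sets (distr \<rho> borel (phi \<beta>))"
      unfolding abs_continuous_def absolutely_continuous_def by blast
    then have "N \<in> sets borel"
      by (auto simp: null_sets_def)
    with N(2) have "emeasure (distr \<rho> borel (phi \<beta>)) N > 0"
      by (auto simp: null_sets_def zero_less_iff_neq_zero)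
    then have "emeasure (distr \<rho> borel (phi \<beta>)) (UNIV - shift_saturation \<beta> N) = 0"
      by (rule emeasure_compl_shift_saturation[OF \<open>N \<in> sets borel\<close>])
    moreover have "shift_saturation \<beta> N \<in> null_sets lborel"
      using beta_nonzero N(1) by (rule null_sets_shift_saturation)
    ultimately show ?thesis
      using \<open>\<not> (\<exists>x. _)\<close> unfolding pure_measure_def purely_singular_continuous_def
      by (auto simp: null_sets_def not_less)
  qed (simp add: pure_measure_def)
qed

lemma atom_imp_hit_prob_pos:
  assumes "emeasure (distr \<rho> borel (phi \<beta>)) {x} > 0"
  obtains j where "hit_prob {x} j > 0"
proof -
  have "(\<Sum>j\<in>UNIV. start_weight u j * hit_prob {x} j) > 0"
    using assms by (simp add: emeasure_distr_phi)
  then obtain j where "start_weight u j * hit_prob {x} j > 0"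
    by (metis (mono_tags, lifting) not_le sum_nonpos)
  then have "hit_prob {x} j > 0"
    using start_weight_nonneg[OF u_nonneg u_vR_pos, of j] hit_prob_nonneg[of "{x}" j]
    by (simp add: zero_less_mult_iff)
  then show ?thesis
    by (rule that)
qed

lemma purely_atomic_distr_phi_finite:
  assumes "purely_atomic (distr \<rho> borel (phi \<beta>))"
  shows "finite (phi \<beta> ` label_seqs E lab UNIV) \<and> finite (atoms (distr \<rho> borel (phi \<beta>))) \<and>
    card (atoms (distr \<rho> borel (phi \<beta>))) \<le> CARD('v)"
proof -
  have "\<exists>x. emeasure (distr \<rho> borel (phi \<beta>)) {x} > 0"
    using prob_space_distr_phi assms by (intro purely_atomic_imp_atom) simp_all
  then obtain x0 where "emeasure (distr \<rho> borel (phi \<beta>)) {x0} > 0"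
    by blast
  then obtain j0 where "hit_prob {x0} j0 > 0"
    by (rule atom_imp_hit_prob_pos)
  then obtain c where c: "\<And>i l. l \<in> label_seqs E lab {i} \<Longrightarrow> phi \<beta> l = c i"
    by (rule phi_label_seqs_determined) blast
  have "phi \<beta> ` label_seqs E lab UNIV \<subseteq> range c"
    unfolding label_seqs_UNIV using c by blast
  moreover have "atoms (distr \<rho> borel (phi \<beta>)) \<subseteq> range c"
  proof
    fix y
    assume "y \<in> atoms (distr \<rho> borel (phi \<beta>))"
    then have "emeasure (distr \<rho> borel (phi \<beta>)) {y} > 0"
      by (simp add: atoms_def)
    then obtain j where "hit_prob {y} j > 0"
      by (rule atom_imp_hit_prob_pos)
    moreover have "phi \<beta> (walk_labels j \<omega>) = c j" for \<omega>
      by (rule c[OF walk_labels_in_label_seqs])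
    ultimately have "y = c j"
      by (cases "y = c j") (auto simp: hit_prob_def)
    then show "y \<in> range c"
      by blast
  qed
  moreover have "finite (range c)" "card (range c) \<le> CARD('v)"
    by (simp_all add: card_image_le)
  ultimately show ?thesis
    using finite_subset card_mono by (metis le_trans)
qed

end

end

theorem theorem1:
  fixes A :: "int set" and E :: "('v::finite \<times> 'v) set" and lab :: "'v \<times> 'v \<Rightarrow> int"
    and I :: "'v set" and \<beta> :: real and lam :: real and vL vR :: "real^'v"
    and \<mu> \<mu>I :: "(nat \<Rightarrow> int) measure"
  defines "M \<equiv> (\<Sum>a\<in>A. label_matrix E lab a)"
  defines "vI \<equiv> (\<chi> i. if i \<in> I then 1 else 0) :: real^'v"
  assumes finA: "finite A"
    and lab_in: "\<forall>e\<in>E. lab e \<in> A"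
    and I_ne: "I \<noteq> {}"
    and prim: "primitive_matrix M"
    and pis: "pisot \<beta>"
    and lam_pos: "lam > 0"
    and vL_pos: "\<forall>i. vL $ i > 0" and vR_pos: "\<forall>i. vR $ i > 0"
    and vL_eig: "vL v* M = lam *\<^sub>R vL" and vR_eig: "M *v vR = lam *\<^sub>R vR"
    and norm: "vL \<bullet> vR = 1"
    and \<mu>_sets: "sets \<mu> = sets (seq_space A)"
    and \<mu>_cyl: "\<forall>eps. set eps \<subseteq> A \<longrightarrow> emeasure \<mu> (cylinder A eps) =
        ennreal (lam powi (- int (length eps)) *
                 (vL \<bullet> (mat_list_prod (map (label_matrix E lab) eps) *v vR)))"
    and \<mu>I_sets: "sets \<mu>I = sets (seq_space A)"
    and \<mu>I_cyl: "\<forall>eps. set eps \<subseteq> A \<longrightarrow> emeasure \<mu>I (cylinder A eps) =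
        ennreal (lam powi (- int (length eps)) *
                 (vI \<bullet> (mat_list_prod (map (label_matrix E lab) eps) *v vR)) / (vI \<bullet> vR))"
  shows "\<forall>\<nu> \<in> {distr \<mu> borel (phi \<beta>), distr \<mu>I borel (phi \<beta>)}.
           pure_measure \<nu> \<and>
           (purely_atomic \<nu> \<longrightarrow> finite (phi \<beta> ` label_seqs E lab UNIV) \<and>
              finite (atoms \<nu>) \<and> card (atoms \<nu>) \<le> CARD('v))"
proof -
  interpret parry_expansion A E lab lam vR \<beta>
    using finA lab_in lam_pos vR_pos vR_eig prim pis unfolding M_def pisot_def by unfold_locales auto
  have \<mu>_cylinder: "\<forall>eps. set eps \<subseteq> A \<longrightarrow> emeasure \<mu> (cylinder A eps) =
        ennreal (lam powi (- int (length eps)) *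
                 (vL \<bullet> (mat_list_prod (map (label_matrix E lab) eps) *v vR)) / (vL \<bullet> vR))"
    using \<mu>_cyl norm by simp
  have vL_nonneg: "\<forall>i. vL $ i \<ge> 0"
    using vL_pos by (simp add: less_imp_le)
  have vI_nonneg: "\<forall>i. vI $ i \<ge> 0"
    by (simp add: vI_def)
  have "vI \<bullet> vR > 0"
    unfolding vI_def using I_ne vR_pos by (rule inner_indicator_pos)
  then show ?thesis
    using norm vL_nonneg vI_nonneg
      pure_measure_distr_phi[OF \<mu>_sets _ _ \<mu>_cylinder] purely_atomic_distr_phi_finite[OF \<mu>_sets _ _ \<mu>_cylinder]
      pure_measure_distr_phi[OF \<mu>I_sets _ _ \<mu>I_cyl] purely_atomic_distr_phi_finite[OF \<mu>I_sets _ _ \<mu>I_cyl]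
    by auto
qed

end
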